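(* Let $\mathcal{G}=(\vec V,\vec E)$ be a DAG and let $V_i,V_j\in\vec V$ be non-adjacent. Then every independence preserving augmentation $(\vec S_i^+,\vec S_j^+)$ of $(V_i,V_j)$ is disjoint from the immoral descendants of $V_i,V_j$: $\operatorname{\mathbf{IMD}}(V_i,V_j)\cap\vec S_i^+=\emptyset$ and $\operatorname{\mathbf{IMD}}(V_i,V_j)\cap\vec S_j^+=\emptyset$.
   Context: For sets $\vec S_i,\vec S_j\subseteq\vec V\setminus\{V_i,V_j\}$, the ordered pair $(\vec S_i^+,\vec S_j^+)=(\vec S_i\cup\{V_i\},\vec S_j\cup\{V_j\})$ is an independence preserving augmentation (IPA) of $(V_i,V_j)$ if there is a set $\vec C\subset\vec V$ (the IPA conditioning set) such that $\vec S_i^+$ and $\vec S_j^+$ are d-separated by $\vec C$ in $\mathcal{G}$. $\operatorname{\mathbf{CH}}(V)$ denotes the children and $\operatorname{\mathbf{DE}}(V)$ the (strict) descendants of $V$ in $\mathcal{G}$; $\operatorname{\mathbf{CH}}(V_i,V_j)=\operatorname{\mathbf{CH}}(V_i)\cap\operatorname{\mathbf{CH}}(V_j)$ and for a set, $\operatorname{\mathbf{DE}}$ of the set is the union of the descendants. The immoral descendants are $\operatorname{\mathbf{IMD}}(V_i,V_j)=\operatorname{\mathbf{CH}}(V_i,V_j)\cup\operatorname{\mathbf{DE}}(\operatorname{\mathbf{CH}}(V_i,V_j))$. *)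

theory Defs
  imports Main
begin

definition dag :: "'v set \<Rightarrow> ('v \<times> 'v) set \<Rightarrow> bool" where
  "dag V E \<longleftrightarrow> finite V \<and> E \<subseteq> V \<times> V \<and> (\<forall>v. (v, v) \<notin> E\<^sup>+)"

definition adjacent :: "('v \<times> 'v) set \<Rightarrow> 'v \<Rightarrow> 'v \<Rightarrow> bool" where
  "adjacent E a b \<longleftrightarrow> (a, b) \<in> E \<or> (b, a) \<in> E"

definition children :: "('v \<times> 'v) set \<Rightarrow> 'v \<Rightarrow> 'v set" where
  "children E v = {w. (v, w) \<in> E}"

definition descendants :: "('v \<times> 'v) set \<Rightarrow> 'v \<Rightarrow> 'v set" where
  "descendants E v = {w. (v, w) \<in> E\<^sup>+}"

definition descendants_set :: "('v \<times> 'v) set \<Rightarrow> 'v set \<Rightarrow> 'v set" where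
  "descendants_set E A = (\<Union>v\<in>A. descendants E v)"

definition common_children :: "('v \<times> 'v) set \<Rightarrow> 'v \<Rightarrow> 'v \<Rightarrow> 'v set" where
  "common_children E a b = children E a \<inter> children E b"

definition immoral_descendants :: "('v \<times> 'v) set \<Rightarrow> 'v \<Rightarrow> 'v \<Rightarrow> 'v set" where
  "immoral_descendants E a b =
     common_children E a b \<union> descendants_set E (common_children E a b)"

definition is_path :: "'v set \<Rightarrow> ('v \<times> 'v) set \<Rightarrow> 'v list \<Rightarrow> bool" where
  "is_path V E p \<longleftrightarrow> p \<noteq> [] \<and> distinct p \<and> set p \<subseteq> V \<and>
     (\<forall>k. Suc k < length p \<longrightarrow> adjacent E (p ! k) (p ! Suc k))"

definition collider :: "('v \<times> 'v) set \<Rightarrow> 'v list \<Rightarrow> nat \<Rightarrow> bool" where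
  "collider E p k \<longleftrightarrow> 0 < k \<and> Suc k < length p \<and>
     (p ! (k - 1), p ! k) \<in> E \<and> (p ! Suc k, p ! k) \<in> E"

definition blocked :: "('v \<times> 'v) set \<Rightarrow> 'v set \<Rightarrow> 'v list \<Rightarrow> bool" where
  "blocked E C p \<longleftrightarrow> (\<exists>k. 0 < k \<and> Suc k < length p \<and>
     ((\<not> collider E p k \<and> p ! k \<in> C) \<or>
      (collider E p k \<and> p ! k \<notin> C \<and> descendants E (p ! k) \<inter> C = {})))"

definition d_separated :: "'v set \<Rightarrow> ('v \<times> 'v) set \<Rightarrow> 'v set \<Rightarrow> 'v set \<Rightarrow> 'v set \<Rightarrow> bool" where
  "d_separated V E X Y C \<longleftrightarrow>
     (\<forall>p. is_path V E p \<and> hd p \<in> X \<and> last p \<in> Y \<longrightarrow> blocked E C p)"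

text \<open>(S_i \<union> {V_i}, S_j \<union> {V_j}) is an IPA of (V_i, V_j).\<close>
definition is_IPA :: "'v set \<Rightarrow> ('v \<times> 'v) set \<Rightarrow> 'v \<Rightarrow> 'v \<Rightarrow> 'v set \<Rightarrow> 'v set \<Rightarrow> bool" where
  "is_IPA V E vi vj Si Sj \<longleftrightarrow>
     Si \<subseteq> V - {vi, vj} \<and> Sj \<subseteq> V - {vi, vj} \<and>
     (\<exists>C. C \<subseteq> V \<and> d_separated V E (insert vi Si) (insert vj Sj) C)"

end

theory Submission
  imports Defs
begin

text \<open>Let \<open>c\<close> be a common child of \<open>V\<^sub>i\<close> and \<open>V\<^sub>j\<close> and \<open>w\<close> a descendant of \<open>c\<close> (or \<open>c\<close> itself).
  If \<open>c\<close> or one of its descendants were conditioned on, the collider path \<open>V\<^sub>i \<rightarrow> c \<leftarrow> V\<^sub>j\<close>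
  would be open. Otherwise the path \<open>V\<^sub>j \<rightarrow> c \<rightarrow> \<dots> \<rightarrow> w\<close> is open: it has no colliders and
  all its interior vertices descend from \<open>c\<close>. So \<open>w\<close> is d-connected to \<open>V\<^sub>j\<close> given the
  conditioning set and cannot lie in \<open>S\<^sub>i\<^sup>+\<close>; symmetrically it cannot lie in \<open>S\<^sub>j\<^sup>+\<close>.\<close>

lemma dag_imp_acyclic: "dag V E \<Longrightarrow> acyclic E"
  by (simp add: dag_def acyclic_def)

definition directed_path :: "('v \<times> 'v) set \<Rightarrow> 'v list \<Rightarrow> bool" where
  "directed_path E p \<longleftrightarrow> (\<forall>k. Suc k < length p \<longrightarrow> (p ! k, p ! Suc k) \<in> E)"

lemma directed_path_Nil [simp]: "directed_path E []"
  by (simp add: directed_path_def)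

lemma directed_path_Cons [simp]:
  "directed_path E (a # p) \<longleftrightarrow> directed_path E p \<and> (p \<noteq> [] \<longrightarrow> (a, hd p) \<in> E)"
  by (cases p) (auto simp: directed_path_def nth_Cons split: nat.splits)

lemma rtrancl_obtains_directed_path:
  assumes "(a, b) \<in> E\<^sup>*"
  obtains p where "directed_path E p" "p \<noteq> []" "hd p = a" "last p = b"
  using assms
proof (induction arbitrary: thesis rule: converse_rtrancl_induct)
  case base
  show ?case by (rule base[of "[b]"]) simp_all
next
  case (step a a')
  obtain p where "directed_path E p" "p \<noteq> []" "hd p = a'" "last p = b"
    using step.IH .
  then show ?case using step by (intro step.prems[of "a # p"]) auto
qed

lemma directed_path_reaches:
  assumes "directed_path E p" "x \<in> set p"
  shows "(hd p, x) \<in> E\<^sup>*"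
  using assms
proof (induction p)
  case (Cons a p)
  show ?case
  proof (cases "x = a")
    case False
    then have "p \<noteq> []" "(hd p, x) \<in> E\<^sup>*" using Cons by auto
    moreover have "(a, hd p) \<in> E" using Cons.prems \<open>p \<noteq> []\<close> by simp
    ultimately show ?thesis by (simp add: converse_rtrancl_into_rtrancl)
  qed simp
qed simp

lemma directed_path_distinct:
  assumes "acyclic E" "directed_path E p"
  shows "distinct p"
  using assms(2)
proof (induction p)
  case (Cons a p)
  have "a \<notin> set p"
  proof
    assume "a \<in> set p"
    then have "p \<noteq> []" "(hd p, a) \<in> E\<^sup>*" using Cons.prems directed_path_reaches by auto
    moreover have "(a, hd p) \<in> E" using Cons.prems \<open>p \<noteq> []\<close> by simp
    ultimately have "(a, a) \<in> E\<^sup>+" by (blast intro: rtrancl_into_trancl2)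
    then show False using assms(1) by (simp add: acyclic_def)
  qed
  then show ?case using Cons by simp
qed simp

lemma directed_path_is_path:
  assumes "dag V E" "directed_path E p" "p \<noteq> []" "hd p \<in> V"
  shows "is_path V E p"
proof -
  have "E \<subseteq> V \<times> V" "acyclic E" using assms(1) by (auto simp: dag_def dag_imp_acyclic)
  have "x \<in> V" if "x \<in> set p" for x
    using directed_path_reaches[OF assms(2) that] assms(4) \<open>E \<subseteq> V \<times> V\<close>
    by (cases rule: rtranclE) auto
  then show ?thesis
    using assms(2,3) directed_path_distinct[OF \<open>acyclic E\<close> assms(2)]
    by (auto simp: is_path_def directed_path_def adjacent_def)
qed

lemma directed_path_not_collider:
  assumes "acyclic E" "directed_path E p"
  shows "\<not> collider E p k"
proof
  assume "collider E p k"
  then have "(p ! Suc k, p ! k) \<in> E" "(p ! k, p ! Suc k) \<in> E"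
    using assms(2) by (auto simp: collider_def directed_path_def)
  then have "(p ! k, p ! k) \<in> E\<^sup>+" by (meson trancl.r_into_trancl trancl_into_trancl)
  then show False using assms(1) by (simp add: acyclic_def)
qed

lemma directed_path_not_blocked:
  assumes "acyclic E" "directed_path E p" "set (tl p) \<inter> C = {}"
  shows "\<not> blocked E C p"
proof -
  have "p ! k \<in> set (tl p)" if "0 < k" "k < length p" for k
    using that by (cases p) (auto simp: nth_Cons')
  then have "p ! k \<notin> C" if "0 < k" "k < length p" for k
    using that assms(3) by blast
  then show ?thesis
    using directed_path_not_collider[OF assms(1,2)] by (auto simp: blocked_def)
qed

lemma is_path_rev:
  assumes "is_path V E p"
  shows "is_path V E (rev p)"
  unfolding is_path_def
proof (intro conjI allI impI)
  show "rev p \<noteq> []" "distinct (rev p)" "set (rev p) \<subseteq> V"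
    using assms by (auto simp: is_path_def)
  fix k assume k: "Suc k < length (rev p)"
  define k' where "k' = length p - Suc (Suc k)"
  have "rev p ! k = p ! Suc k'" "rev p ! Suc k = p ! k'"
    using k by (simp_all add: rev_nth k'_def Suc_diff_Suc)
  moreover have "adjacent E (p ! k') (p ! Suc k')"
    using assms k unfolding is_path_def k'_def by auto
  ultimately show "adjacent E (rev p ! k) (rev p ! Suc k)"
    by (auto simp: adjacent_def)
qed

lemma blocked_rev:
  assumes "blocked E C (rev p)"
  shows "blocked E C p"
proof -
  obtain k where k: "0 < k" "Suc k < length p"
    "(\<not> collider E (rev p) k \<and> rev p ! k \<in> C) \<or>
     (collider E (rev p) k \<and> rev p ! k \<notin> C \<and> descendants E (rev p ! k) \<inter> C = {})"
    using assms unfolding blocked_def by auto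
  define k' where "k' = length p - Suc k"
  have k': "0 < k'" "Suc k' < length p"
    using k unfolding k'_def by auto
  have "rev p ! k = p ! k'" "rev p ! (k - 1) = p ! Suc k'" "rev p ! Suc k = p ! (k' - 1)"
    using k by (simp_all add: rev_nth k'_def Suc_diff_Suc)
  then have "collider E (rev p) k \<longleftrightarrow> collider E p k'" "rev p ! k = p ! k'"
    using k k' unfolding collider_def by auto
  then show ?thesis
    unfolding blocked_def using k k' by metis
qed

lemma d_separated_commute:
  assumes "d_separated V E X Y C"
  shows "d_separated V E Y X C"
  unfolding d_separated_def
proof (intro allI impI)
  fix p assume p: "is_path V E p \<and> hd p \<in> Y \<and> last p \<in> X"
  then have "p \<noteq> []" by (simp add: is_path_def)
  then have "is_path V E (rev p) \<and> hd (rev p) \<in> X \<and> last (rev p) \<in> Y"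
    using p is_path_rev[of V E p] by (simp add: hd_rev last_rev)
  then show "blocked E C p"
    using assms blocked_rev unfolding d_separated_def by blast
qed

lemma immoral_descendants_commute:
  "immoral_descendants E a b = immoral_descendants E b a"
  by (simp add: immoral_descendants_def common_children_def Int_commute)

lemma immoral_descendants_iff:
  "w \<in> immoral_descendants E a b \<longleftrightarrow> (\<exists>c. (a, c) \<in> E \<and> (b, c) \<in> E \<and> (c, w) \<in> E\<^sup>*)"
  by (auto simp: immoral_descendants_def common_children_def children_def
      descendants_set_def descendants_def rtrancl_eq_or_trancl)

lemma d_separated_common_child_unconditioned:
  assumes "dag V E" "d_separated V E X Y C"
    and "a \<in> X" "b \<in> Y" "a \<noteq> b" "(a, c) \<in> E" "(b, c) \<in> E"
  shows "c \<notin> C \<and> descendants E c \<inter> C = {}"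
proof -
  have "E \<subseteq> V \<times> V" "acyclic E" using assms(1) by (auto simp: dag_def dag_imp_acyclic)
  then have "c \<noteq> a" "c \<noteq> b" using assms(6,7) by (auto simp: acyclic_def)
  then have "is_path V E [a, c, b]"
    using assms(5-7) \<open>E \<subseteq> V \<times> V\<close> by (auto simp: is_path_def adjacent_def less_Suc_eq)
  then have "blocked E C [a, c, b]"
    using assms(2-4) by (simp add: d_separated_def)
  moreover have "collider E [a, c, b] 1"
    using assms(6,7) by (simp add: collider_def)
  ultimately show ?thesis by (auto simp: blocked_def less_Suc_eq)
qed

lemma d_separated_immoral_descendant_notin:
  assumes "dag V E" "d_separated V E X Y C"
    and "a \<in> X" "b \<in> Y" "a \<noteq> b" "w \<in> immoral_descendants E a b"
  shows "w \<notin> X"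
proof
  assume "w \<in> X"
  obtain c where ac: "(a, c) \<in> E" and bc: "(b, c) \<in> E" and cw: "(c, w) \<in> E\<^sup>*"
    using assms(6) immoral_descendants_iff by metis
  have "E \<subseteq> V \<times> V" "acyclic E" using assms(1) by (auto simp: dag_def dag_imp_acyclic)
  have c_free: "c \<notin> C \<and> descendants E c \<inter> C = {}"
    using d_separated_common_child_unconditioned[OF assms(1-5) ac bc] .
  obtain q where q: "directed_path E q" "q \<noteq> []" "hd q = c" "last q = w"
    using rtrancl_obtains_directed_path[OF cw] .
  have "set q \<inter> C = {}"
    using directed_path_reaches[OF q(1)] q(3) c_free
    by (auto simp: descendants_def rtrancl_eq_or_trancl)
  moreover have "directed_path E (b # q)" using q bc by simp
  moreover have "b \<in> V" using bc \<open>E \<subseteq> V \<times> V\<close> by auto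
  ultimately have "is_path V E (b # q)" "\<not> blocked E C (b # q)"
    using directed_path_is_path[OF assms(1)] directed_path_not_blocked[OF \<open>acyclic E\<close>] by auto
  then show False
    using d_separated_commute[OF assms(2)] assms(4) \<open>w \<in> X\<close> q(2,4)
    by (auto simp: d_separated_def)
qed

theorem lemma5:
  fixes V :: "'v set" and E :: "('v \<times> 'v) set" and vi vj :: 'v and Si Sj :: "'v set"
  assumes "dag V E"
    and "vi \<in> V" and "vj \<in> V" and "vi \<noteq> vj"
    and "\<not> adjacent E vi vj"
    and "is_IPA V E vi vj Si Sj"
  shows "immoral_descendants E vi vj \<inter> insert vi Si = {} \<and>
         immoral_descendants E vi vj \<inter> insert vj Sj = {}"
proof -
  obtain C where sep: "d_separated V E (insert vi Si) (insert vj Sj) C"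
    using assms(6) unfolding is_IPA_def by blast
  have "w \<notin> insert vi Si" if "w \<in> immoral_descendants E vi vj" for w
    using d_separated_immoral_descendant_notin[OF assms(1) sep _ _ assms(4) that] by simp
  moreover have "w \<notin> insert vj Sj" if "w \<in> immoral_descendants E vi vj" for w
    using d_separated_immoral_descendant_notin[OF assms(1) d_separated_commute[OF sep]
        _ _ assms(4)[symmetric]] that immoral_descendants_commute by fastforce
  ultimately show ?thesis by blast
qed

end
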